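(* Fix an integer $M\ge2$ and constants $T_s,L_{s,d},L_{s,r},L_{r,d}>0$, $\delta\in(0,1]$, $\varrho\in(0,1)$. Put $g_{s,d}=\sin^2(\pi/M)T_sL_{s,d}$ and $g_{r,d}=\sin^2(\pi/M)T_sL_{s,r}L_{r,d}$. For $\bar\gamma>0$ set $\bar\gamma_{s,r}=\bar\gamma_{s,d}=\bar\gamma_{r,d}=P_s/N_0=\bar\gamma$, let $\epsilon$ be defined by $\bar\gamma^{ID}_{s,r}=\frac{2(1-\varrho)T_sL_{s,r}}{2-\varrho}\bar\gamma$ and $$\epsilon=\frac{1}{2(1+\bar\gamma^{ID}_{s,r})}\ (M=2),\qquad \epsilon=1.03\sqrt{\tfrac{1+\cos\frac{\pi}{M}}{2\cos\frac{\pi}{M}}}\Big[1-\sqrt{\tfrac{(1-\cos\frac{\pi}{M})\bar\gamma^{ID}_{s,r}}{1+(1-\cos\frac{\pi}{M})\bar\gamma^{ID}_{s,r}}}\Big]\ (M>2),$$ and $\eta=\ln\frac{(1-\epsilon)(M-1)}{\epsilon}$. Define $$a_1=\frac{\sqrt\pi\,(2g_{s,d})^{-1/4}}{4\bar\gamma}\Big(\frac{g_{s,d}}2+\bar\gamma^{-1}\Big)^{-3/4},\quad b_1=\frac14+\frac{\sqrt{g_{s,d}/2+\bar\gamma^{-1}}}{2\sqrt{2g_{s,d}}},$$ $$a_2=\frac{2\bar\gamma}{\delta g_{r,d}(g_{s,d}\bar\gamma+2)\bar\gamma^2},\quad b_2=\frac{\delta g_{r,d}\bar\gamma^2}{2\bar\gamma},$$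 $$Z_1=a_1\sqrt{2\eta}\,e^{-2b_1\eta},\quad Z_2=\frac{a_2}{\varrho}\ln(1+b_2\varrho),\quad Z_3=e^{\eta}Z_1,$$ $$\mathcal P_C=(1-\epsilon)(Z_1+Z_2),\qquad \mathcal P_E=\frac{\epsilon Z_3}{M-1}+\frac{\epsilon}{g_{s,d}\bar\gamma+2}.$$ Then $\mathcal P_C+\mathcal P_E$ (which is well defined and positive for all sufficiently large $\bar\gamma$) satisfies $$\lim_{\bar\gamma\to\infty}\frac{\ln(\mathcal P_C+\mathcal P_E)}{\ln\bar\gamma}=-2,$$ i.e. the diversity order is two.
   Context: $\mathcal P_C+\mathcal P_E$ is the paper's closed-form approximate average symbol error rate of its proposed detector at the destination of a three-node SWIPT-enabled differential decode-and-forward relay network with $M$-DPSK and power splitting ratio $\varrho$ at the relay, under Rayleigh fading with average SNRs $\bar\gamma_{s,r},\bar\gamma_{s,d},\bar\gamma_{r,d}$ (all set equal to $\bar\gamma$, with unit-mean channel gains so that $P_s/N_0=\bar\gamma$). *)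

theory Defs
  imports "HOL-Analysis.Analysis"
begin

text \<open>All quantities are functions of the common average SNR g (= gamma bar).
Parameters: M (constellation size), Ts, Lsd, Lsr, Lrd, delta, rho (power splitting ratio).\<close>

definition g_sd :: "nat \<Rightarrow> real \<Rightarrow> real \<Rightarrow> real" where
  "g_sd M Ts Lsd = (sin (pi / real M))\<^sup>2 * Ts * Lsd"

definition g_rd :: "nat \<Rightarrow> real \<Rightarrow> real \<Rightarrow> real \<Rightarrow> real" where
  "g_rd M Ts Lsr Lrd = (sin (pi / real M))\<^sup>2 * Ts * Lsr * Lrd"

definition gamma_ID_sr :: "real \<Rightarrow> real \<Rightarrow> real \<Rightarrow> real \<Rightarrow> real" where
  "gamma_ID_sr rho Ts Lsr g = 2 * (1 - rho) * Ts * Lsr / (2 - rho) * g"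

definition eps_err :: "nat \<Rightarrow> real \<Rightarrow> real \<Rightarrow> real \<Rightarrow> real \<Rightarrow> real" where
  "eps_err M rho Ts Lsr g =
     (let gi = gamma_ID_sr rho Ts Lsr g; c = cos (pi / real M) in
      if M = 2 then 1 / (2 * (1 + gi))
      else 1.03 * sqrt ((1 + c) / (2 * c)) * (1 - sqrt ((1 - c) * gi / (1 + (1 - c) * gi))))"

definition eta_thr :: "nat \<Rightarrow> real \<Rightarrow> real" where
  "eta_thr M e = ln ((1 - e) * (real M - 1) / e)"

definition SER :: "nat \<Rightarrow> real \<Rightarrow> real \<Rightarrow> real \<Rightarrow> real \<Rightarrow> real \<Rightarrow> real \<Rightarrow> real \<Rightarrow> real" where
  "SER M Ts Lsd Lsr Lrd delta rho g =
     (let gsd = g_sd M Ts Lsd; grd = g_rd M Ts Lsr Lrd;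
          e = eps_err M rho Ts Lsr g; eta = eta_thr M e;
          a1 = sqrt pi * (2 * gsd) powr (-1/4) / (4 * g) * (gsd / 2 + 1 / g) powr (-3/4);
          b1 = 1/4 + sqrt (gsd / 2 + 1 / g) / (2 * sqrt (2 * gsd));
          a2 = 2 * g / (delta * grd * (gsd * g + 2) * g\<^sup>2);
          b2 = delta * grd * g\<^sup>2 / (2 * g);
          Z1 = a1 * sqrt (2 * eta) * exp (- 2 * b1 * eta);
          Z2 = a2 / rho * ln (1 + b2 * rho);
          Z3 = exp eta * Z1;
          PC = (1 - e) * (Z1 + Z2);
          PE = e * Z3 / (real M - 1) + e / (gsd * g + 2)
      in PC + PE)"

end

theory Submission
  imports Defs "HOL-Real_Asymp.Real_Asymp"
begin

text \<open>The detection error probability \<open>\<epsilon>\<close> at the relay decays like \<open>1/\<gamma>\<close>, so the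
  threshold \<open>\<eta>\<close> grows like \<open>ln \<gamma>\<close>, and since \<open>b\<^sub>1 \<ge> 1/2\<close> the factor \<open>exp (-2 b\<^sub>1 \<eta>)\<close> is at
  most \<open>exp (-\<eta>) \<le> 2\<epsilon>\<close>, a further factor \<open>1/\<gamma>\<close>. Hence every term of \<open>P\<^sub>C + P\<^sub>E\<close> is
  \<open>O(ln \<gamma> / \<gamma>\<^sup>2)\<close>, while the direct-link term \<open>\<epsilon> / (g\<^sub>s\<^sub>d \<gamma> + 2)\<close> alone is of exact order
  \<open>1/\<gamma>\<^sup>2\<close>; squeezed between these two rates, \<open>ln (P\<^sub>C + P\<^sub>E) / ln \<gamma>\<close> tends to \<open>-2\<close>.\<close>

lemma ln_div_ln_tendsto_neg_two:
  fixes f :: "real \<Rightarrow> real" and c :: real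
  assumes bigo: "f \<in> O(\<lambda>x. ln x / x\<^sup>2)"
    and "c > 0" and lower: "\<forall>\<^sub>F x in at_top. c / x\<^sup>2 \<le> f x"
  shows "((\<lambda>x. ln (f x) / ln x) \<longlongrightarrow> -2) at_top"
proof -
  obtain C where "C > 0" and upper: "\<forall>\<^sub>F x in at_top. norm (f x) \<le> C * norm (ln x / x\<^sup>2)"
    using bigo by (elim landau_o.bigE)
  have "\<forall>\<^sub>F x in at_top. (ln c - 2 * ln x) / ln x \<le> ln (f x) / ln x
          \<and> ln (f x) / ln x \<le> (ln C + ln (ln x) - 2 * ln x) / ln x"
    using lower upper eventually_gt_at_top[of 1]
  proof eventually_elim
    case (elim x)
    have "0 < ln x" "0 < c / x\<^sup>2" using elim \<open>c > 0\<close> by auto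
    hence "0 < f x" using elim by linarith
    have "ln c - 2 * ln x = ln (c / x\<^sup>2)"
      using \<open>c > 0\<close> elim by (simp add: ln_div ln_realpow)
    also have "\<dots> \<le> ln (f x)"
      using elim \<open>0 < c / x\<^sup>2\<close> by simp
    finally have lo: "ln c - 2 * ln x \<le> ln (f x)" .
    have "ln (f x) \<le> ln (C * (ln x / x\<^sup>2))"
      using elim \<open>0 < f x\<close> by (simp add: abs_of_pos)
    also have "\<dots> = ln C + ln (ln x) - 2 * ln x"
      using \<open>C > 0\<close> \<open>0 < ln x\<close> elim by (simp add: ln_mult ln_div ln_realpow)
    finally have up: "ln (f x) \<le> ln C + ln (ln x) - 2 * ln x" .
    show ?case
      using divide_right_mono[OF lo] divide_right_mono[OF up] \<open>0 < ln x\<close> by simp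
  qed
  moreover have "((\<lambda>x. (ln c - 2 * ln x) / ln x) \<longlongrightarrow> -2) at_top"
    and "((\<lambda>x. (ln C + ln (ln x) - 2 * ln x) / ln x) \<longlongrightarrow> -2) at_top"
    by real_asymp+
  ultimately show ?thesis
    unfolding eventually_conj_iff by (elim conjE tendsto_sandwich)
qed

lemma eventually_bounds_of_scaled_tendsto:
  fixes f :: "real \<Rightarrow> real"
  assumes "((\<lambda>x. x * f x) \<longlongrightarrow> l) at_top" and "l > 0"
  shows "\<forall>\<^sub>F x in at_top. l / 2 / x \<le> f x \<and> f x \<le> 2 * l / x"
proof -
  have "\<forall>\<^sub>F x in at_top. l / 2 < x * f x" "\<forall>\<^sub>F x in at_top. x * f x < 2 * l"
    using order_tendstoD(1)[OF assms(1), of "l / 2"] order_tendstoD(2)[OF assms(1), of "2 * l"] assms(2)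
    by simp_all
  with eventually_gt_at_top[of 0] show ?thesis
  proof eventually_elim
    case (elim x)
    thus ?case by (auto simp: field_simps)
  qed
qed

lemma eps_err_scaled_tendsto:
  assumes "M \<ge> 2" and "Ts > 0" and "Lsr > 0" and "0 < rho" and "rho < 1"
  obtains l where "l > 0" and "((\<lambda>g. g * eps_err M rho Ts Lsr g) \<longlongrightarrow> l) at_top"
proof -
  define c0 where "c0 = 2 * (1 - rho) * Ts * Lsr / (2 - rho)"
  have "c0 > 0" using assms by (simp add: c0_def)
  have gamma_ID: "gamma_ID_sr rho Ts Lsr g = c0 * g" for g
    by (simp add: gamma_ID_sr_def c0_def)
  show ?thesis
  proof (cases "M = 2")
    case True
    have "((\<lambda>g. g * (1 / (2 * (1 + c0 * g)))) \<longlongrightarrow> 1 / (2 * c0)) at_top"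
      using \<open>c0 > 0\<close> by (real_asymp simp: field_simps)
    with \<open>c0 > 0\<close> show ?thesis
      by (intro that[of "1 / (2 * c0)"]) (simp_all add: eps_err_def gamma_ID True)
  next
    case False
    define c where "c = cos (pi / real M)"
    have "0 < pi / real M" "pi / real M < pi / 2" "pi / real M \<le> pi"
      using False \<open>M \<ge> 2\<close> by (auto simp: field_simps)
    hence "0 < c" "c < 1"
      unfolding c_def using cos_gt_zero_pi cos_monotone_0_pi[of 0 "pi / real M"] by simp_all
    define A where "A = 1.03 * sqrt ((1 + c) / (2 * c))"
    define d where "d = (1 - c) * c0"
    have "A > 0" "d > 0" using \<open>0 < c\<close> \<open>c < 1\<close> \<open>c0 > 0\<close> by (simp_all add: A_def d_def)
    have "eps_err M rho Ts Lsr g = A * (1 - sqrt (d * g / (1 + d * g)))" for g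
      by (simp add: eps_err_def gamma_ID False A_def d_def c_def Let_def mult.assoc)
    moreover have "((\<lambda>g. g * (A * (1 - sqrt (d * g / (1 + d * g))))) \<longlongrightarrow> A / (2 * d)) at_top"
      using \<open>d > 0\<close> by (real_asymp simp: field_simps)
    ultimately show ?thesis
      using \<open>A > 0\<close> \<open>d > 0\<close> by (intro that[of "A / (2 * d)"]) simp_all
  qed
qed

lemma eta_thr_bounds:
  assumes "M \<ge> 2" and "0 < e" and "e \<le> 1/2"
  shows "0 \<le> eta_thr M e" and "eta_thr M e \<le> ln ((real M - 1) / e)"
    and "exp (- eta_thr M e) \<le> 2 * e"
proof -
  have "1 \<le> real M - 1" using assms(1) by simp
  hence "1 - e \<le> (1 - e) * (real M - 1)"
    using assms(3) mult_left_mono[of 1 "real M - 1" "1 - e"] by simp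
  hence "1/2 \<le> (1 - e) * (real M - 1)" using assms(3) by linarith
  hence ratio: "1 \<le> (1 - e) * (real M - 1) / e"
    using assms by (simp add: le_divide_eq)
  thus "0 \<le> eta_thr M e" by (simp add: eta_thr_def)
  have "(1 - e) * (real M - 1) / e \<le> (real M - 1) / e"
    using assms \<open>1 \<le> real M - 1\<close> by (intro divide_right_mono) auto
  thus "eta_thr M e \<le> ln ((real M - 1) / e)"
    using ratio by (simp add: eta_thr_def)
  have "exp (- eta_thr M e) = e / ((1 - e) * (real M - 1))"
    using ratio by (simp add: eta_thr_def exp_minus)
  also have "\<dots> \<le> e / (1/2)"
    using assms \<open>1/2 \<le> (1 - e) * (real M - 1)\<close> by (intro divide_left_mono) auto
  finally show "exp (- eta_thr M e) \<le> 2 * e" by simp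
qed

lemma g_sd_g_rd_pos:
  assumes "M \<ge> 2" and "Ts > 0" and "Lsd > 0" and "Lsr > 0" and "Lrd > 0"
  shows "g_sd M Ts Lsd > 0" and "g_rd M Ts Lsr Lrd > 0"
proof -
  have "sin (pi / real M) > 0" using assms(1) by (intro sin_gt_zero) (auto simp: field_simps)
  thus "g_sd M Ts Lsd > 0" "g_rd M Ts Lsr Lrd > 0"
    using assms by (simp_all add: g_sd_def g_rd_def)
qed

definition coeff_a1 :: "real \<Rightarrow> real \<Rightarrow> real" where
  "coeff_a1 gsd g = sqrt pi * (2 * gsd) powr (-1/4) / (4 * g) * (gsd / 2 + 1 / g) powr (-3/4)"

definition coeff_b1 :: "real \<Rightarrow> real \<Rightarrow> real" where
  "coeff_b1 gsd g = 1/4 + sqrt (gsd / 2 + 1 / g) / (2 * sqrt (2 * gsd))"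

definition Z1_term :: "real \<Rightarrow> real \<Rightarrow> real \<Rightarrow> real" where
  "Z1_term gsd eta g = coeff_a1 gsd g * sqrt (2 * eta) * exp (- 2 * coeff_b1 gsd g * eta)"

definition Z2_term :: "real \<Rightarrow> real \<Rightarrow> real \<Rightarrow> real \<Rightarrow> real \<Rightarrow> real" where
  "Z2_term delta grd gsd rho g =
     2 * g / (delta * grd * (gsd * g + 2) * g\<^sup>2) / rho * ln (1 + delta * grd * g\<^sup>2 / (2 * g) * rho)"

lemma SER_eq:
  "SER M Ts Lsd Lsr Lrd delta rho g =
     (let gsd = g_sd M Ts Lsd; e = eps_err M rho Ts Lsr g; eta = eta_thr M e;
          Z1 = Z1_term gsd eta g
      in (1 - e) * (Z1 + Z2_term delta (g_rd M Ts Lsr Lrd) gsd rho g)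
         + e * (exp eta * Z1) / (real M - 1) + e / (gsd * g + 2))"
  by (simp only: SER_def Z1_term_def Z2_term_def coeff_a1_def coeff_b1_def Let_def)

lemma coeff_b1_ge_half:
  assumes "gsd > 0" and "g > 0"
  shows "1/2 \<le> coeff_b1 gsd g"
proof -
  have "sqrt (2 * gsd) = 2 * sqrt (gsd / 2)"
    using real_sqrt_mult[of 4 "gsd / 2"] by simp
  moreover have "sqrt (gsd / 2) \<le> sqrt (gsd / 2 + 1 / g)" using assms by simp
  ultimately show ?thesis
    using assms by (simp add: coeff_b1_def field_simps)
qed

lemma Z1_term_bounds:
  assumes "gsd > 0" and "g > 0" and "eta \<ge> 0"
  shows "0 \<le> Z1_term gsd eta g" and "exp eta * Z1_term gsd eta g \<le> coeff_a1 gsd g * sqrt (2 * eta)"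
proof -
  have a1: "0 \<le> coeff_a1 gsd g" using assms by (simp add: coeff_a1_def)
  thus "0 \<le> Z1_term gsd eta g" using assms(3) by (simp add: Z1_term_def)
  have "eta \<le> 2 * coeff_b1 gsd g * eta"
    using coeff_b1_ge_half[OF assms(1,2)] assms(3) mult_right_mono[of 1 "2 * coeff_b1 gsd g" eta]
    by simp
  hence "exp eta * exp (- 2 * coeff_b1 gsd g * eta) \<le> 1"
    by (simp add: exp_add[symmetric])
  have "exp eta * Z1_term gsd eta g
      = coeff_a1 gsd g * sqrt (2 * eta) * (exp eta * exp (- 2 * coeff_b1 gsd g * eta))"
    by (simp add: Z1_term_def)
  also have "\<dots> \<le> coeff_a1 gsd g * sqrt (2 * eta) * 1"
    using a1 assms(3) \<open>exp eta * exp (- 2 * coeff_b1 gsd g * eta) \<le> 1\<close>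
    by (intro mult_left_mono) auto
  finally show "exp eta * Z1_term gsd eta g \<le> coeff_a1 gsd g * sqrt (2 * eta)" by simp
qed

lemma Z2_term_nonneg:
  "0 < delta \<Longrightarrow> 0 < grd \<Longrightarrow> 0 < gsd \<Longrightarrow> 0 < rho \<Longrightarrow> 0 < g \<Longrightarrow> 0 \<le> Z2_term delta grd gsd rho g"
  by (simp add: Z2_term_def)

lemma SER_bounds:
  assumes "M \<ge> 2" and "Ts > 0" and "Lsd > 0" and "Lsr > 0" and "Lrd > 0"
    and "0 < delta" and "0 < rho" and "g > 0"
    and e_pos: "0 < eps_err M rho Ts Lsr g" and e_le: "eps_err M rho Ts Lsr g \<le> 1/2"
  defines "gsd \<equiv> g_sd M Ts Lsd" and "e \<equiv> eps_err M rho Ts Lsr g"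
  shows "e / (gsd * g + 2) \<le> SER M Ts Lsd Lsr Lrd delta rho g"
    and "SER M Ts Lsd Lsr Lrd delta rho g \<le>
           3 * (e * (coeff_a1 gsd g * sqrt (2 * eta_thr M e)))
           + Z2_term delta (g_rd M Ts Lsr Lrd) gsd rho g + e / (gsd * g + 2)"
proof -
  have "gsd > 0" "g_rd M Ts Lsr Lrd > 0"
    using g_sd_g_rd_pos assms by (simp_all add: gsd_def)
  have "0 < e" "e \<le> 1/2" "1 \<le> real M - 1" using e_pos e_le assms(1) by (simp_all add: e_def)
  define eta where "eta = eta_thr M e"
  note eta = eta_thr_bounds[OF assms(1) \<open>0 < e\<close> \<open>e \<le> 1/2\<close>, folded eta_def]
  define Z1 where "Z1 = Z1_term gsd eta g"
  define Z2 where "Z2 = Z2_term delta (g_rd M Ts Lsr Lrd) gsd rho g"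
  define W where "W = coeff_a1 gsd g * sqrt (2 * eta)"
  have S: "SER M Ts Lsd Lsr Lrd delta rho g
             = (1 - e) * (Z1 + Z2) + e * (exp eta * Z1) / (real M - 1) + e / (gsd * g + 2)"
    by (simp add: SER_eq Z1_def Z2_def gsd_def e_def eta_def Let_def)
  have "0 \<le> Z1" "exp eta * Z1 \<le> W"
    using Z1_term_bounds[OF \<open>gsd > 0\<close> \<open>g > 0\<close> eta(1)] by (simp_all add: Z1_def W_def)
  have "0 \<le> Z2"
    using Z2_term_nonneg \<open>g_rd M Ts Lsr Lrd > 0\<close> \<open>gsd > 0\<close> assms by (simp add: Z2_def)
  have Z1_le: "Z1 \<le> 2 * e * W"
  proof -
    have "Z1 = exp (- eta) * (exp eta * Z1)" by (simp add: exp_minus)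
    also have "\<dots> \<le> 2 * e * W"
      using eta(3) \<open>exp eta * Z1 \<le> W\<close> \<open>0 \<le> Z1\<close> \<open>0 < e\<close> by (intro mult_mono) auto
    finally show ?thesis .
  qed
  have Z3_le: "e * (exp eta * Z1) / (real M - 1) \<le> e * W"
  proof -
    have "e * (exp eta * Z1) / (real M - 1) \<le> e * (exp eta * Z1) / 1"
      using \<open>1 \<le> real M - 1\<close> \<open>0 < e\<close> \<open>0 \<le> Z1\<close> by (intro divide_left_mono) auto
    also have "\<dots> \<le> e * W" using \<open>exp eta * Z1 \<le> W\<close> \<open>0 < e\<close> by simp
    finally show ?thesis .
  qed
  have "0 \<le> (1 - e) * (Z1 + Z2)" "0 \<le> e * (exp eta * Z1) / (real M - 1)"
    using \<open>e \<le> 1/2\<close> \<open>0 < e\<close> \<open>0 \<le> Z1\<close> \<open>0 \<le> Z2\<close> \<open>1 \<le> real M - 1\<close> by simp_all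
  thus "e / (gsd * g + 2) \<le> SER M Ts Lsd Lsr Lrd delta rho g"
    unfolding S by linarith
  have "(1 - e) * (Z1 + Z2) \<le> Z1 + Z2"
    using \<open>0 < e\<close> \<open>e \<le> 1/2\<close> \<open>0 \<le> Z1\<close> \<open>0 \<le> Z2\<close> by (intro mult_left_le_one_le) auto
  with Z1_le Z3_le show "SER M Ts Lsd Lsr Lrd delta rho g \<le>
      3 * (e * (coeff_a1 gsd g * sqrt (2 * eta_thr M e))) + Z2 + e / (gsd * g + 2)"
    unfolding S W_def eta_def by linarith
qed

lemma sqrt_eta_thr_bigo:
  fixes e :: "real \<Rightarrow> real"
  assumes "M \<ge> 2" and "k > 0" and e: "\<forall>\<^sub>F g in at_top. 0 < e g \<and> e g \<le> 1/2 \<and> k / g \<le> e g"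
  shows "(\<lambda>g. sqrt (2 * eta_thr M (e g))) \<in> O(ln)"
proof -
  define L where "L = ln ((real M - 1) / k)"
  have "\<forall>\<^sub>F g in at_top. norm (sqrt (2 * eta_thr M (e g))) \<le> norm (1 + 2 * L + 2 * ln g)"
    using e eventually_ge_at_top[of 1]
  proof eventually_elim
    case (elim g)
    note eta = eta_thr_bounds[OF \<open>M \<ge> 2\<close>, of "e g"]
    have "(real M - 1) / e g \<le> (real M - 1) / (k / g)"
      using elim \<open>k > 0\<close> \<open>M \<ge> 2\<close> by (intro divide_left_mono) auto
    hence "ln ((real M - 1) / e g) \<le> ln ((real M - 1) / k * g)"
      using elim \<open>M \<ge> 2\<close> by (intro ln_mono) auto
    also have "\<dots> = L + ln g"
      using elim \<open>k > 0\<close> \<open>M \<ge> 2\<close> ln_mult[of "(real M - 1) / k" g] by (simp add: L_def)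
    finally have "eta_thr M (e g) \<le> L + ln g" using eta(2) elim by linarith
    moreover have "sqrt (2 * eta_thr M (e g)) \<le> 1 + 2 * eta_thr M (e g)"
      using eta(1) elim by (intro real_le_lsqrt) (auto simp: power2_eq_square algebra_simps)
    ultimately show ?case using eta(1) elim by simp
  qed
  hence "(\<lambda>g. sqrt (2 * eta_thr M (e g))) \<in> O(\<lambda>g. 1 + 2 * L + 2 * ln g)"
    by (rule landau_o.big_mono)
  also have "(\<lambda>g::real. 1 + 2 * L + 2 * ln g) \<in> O(ln)" by real_asymp
  finally show ?thesis .
qed

lemma SER_order:
  assumes params: "M \<ge> 2" "Ts > 0" "Lsd > 0" "Lsr > 0" "Lrd > 0" "0 < delta" "0 < rho"
    and "k > 0"
    and eps: "\<forall>\<^sub>F g in at_top. k / g \<le> eps_err M rho Ts Lsr g \<and> eps_err M rho Ts Lsr g \<le> K / g"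
  defines "gsd \<equiv> g_sd M Ts Lsd"
  shows "\<forall>\<^sub>F g in at_top. k / (gsd + 2) / g\<^sup>2 \<le> SER M Ts Lsd Lsr Lrd delta rho g"
    and "SER M Ts Lsd Lsr Lrd delta rho \<in> O(\<lambda>g. ln g / g\<^sup>2)"
proof -
  define e where "e = eps_err M rho Ts Lsr"
  define grd where "grd = g_rd M Ts Lsr Lrd"
  have "gsd > 0" "grd > 0" using g_sd_g_rd_pos params by (simp_all add: gsd_def grd_def)
  have e_ev: "\<forall>\<^sub>F g in at_top. 1 \<le> g \<and> 0 < e g \<and> e g \<le> 1/2 \<and> k / g \<le> e g \<and> e g \<le> K / g"
    using eps eventually_ge_at_top[of "max 1 (2 * K)"]
  proof eventually_elim
    case (elim g)
    hence "0 < k / g" "K / g \<le> 1/2" using \<open>k > 0\<close> by (auto simp: field_simps)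
    hence "0 < e g" "e g \<le> 1/2" using elim unfolding e_def by linarith+
    with elim show ?case by (simp add: e_def)
  qed
  note bounds = SER_bounds[OF params, folded gsd_def grd_def e_def]
  show "\<forall>\<^sub>F g in at_top. k / (gsd + 2) / g\<^sup>2 \<le> SER M Ts Lsd Lsr Lrd delta rho g"
    using e_ev
  proof eventually_elim
    case (elim g)
    have "k / (gsd + 2) / g\<^sup>2 = (k / g) / ((gsd + 2) * g)"
      by (simp add: power2_eq_square field_simps)
    also have "\<dots> \<le> e g / (gsd * g + 2)"
    proof (rule frac_le)
      have "0 < gsd * g" using elim \<open>gsd > 0\<close> by simp
      thus "0 < gsd * g + 2" by linarith
      show "gsd * g + 2 \<le> (gsd + 2) * g" using elim by (simp add: algebra_simps)
    qed (use elim in auto)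
    also have "\<dots> \<le> SER M Ts Lsd Lsr Lrd delta rho g"
      using elim bounds(1)[of g] by simp
    finally show ?case .
  qed
  define U where "U g = 3 * (e g * (coeff_a1 gsd g * sqrt (2 * eta_thr M (e g))))
      + Z2_term delta grd gsd rho g + e g * (1 / (gsd * g + 2))" for g
  have "\<forall>\<^sub>F g in at_top. norm (SER M Ts Lsd Lsr Lrd delta rho g) \<le> norm (U g)"
    using e_ev
  proof eventually_elim
    case (elim g)
    have "0 \<le> e g / (gsd * g + 2)" using elim \<open>gsd > 0\<close> by simp
    with bounds[of g] elim show ?case by (simp add: U_def)
  qed
  hence "SER M Ts Lsd Lsr Lrd delta rho \<in> O(U)" by (rule landau_o.big_mono)
  also have "U \<in> O(\<lambda>g. ln g / g\<^sup>2)"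
  proof -
    have e: "e \<in> O(\<lambda>g. 1 / g)"
      using e_ev by (intro bigoI[of _ K]) (auto elim!: eventually_mono)
    have a1: "coeff_a1 gsd \<in> O(\<lambda>g. 1 / g)"
      unfolding coeff_a1_def using \<open>gsd > 0\<close> by real_asymp
    have sqrt_eta: "(\<lambda>g. sqrt (2 * eta_thr M (e g))) \<in> O(ln)"
      using e_ev \<open>M \<ge> 2\<close> \<open>k > 0\<close> by (intro sqrt_eta_thr_bigo) (auto elim!: eventually_mono)
    have "(\<lambda>g. 1 / g * (1 / g * ln g)) \<in> O(\<lambda>g::real. ln g / g\<^sup>2)"
      and "(\<lambda>g. 1 / g * (1 / g)) \<in> O(\<lambda>g::real. ln g / g\<^sup>2)"
      and "(\<lambda>g. 1 / (gsd * g + 2)) \<in> O(\<lambda>g::real. 1 / g)"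
      and "Z2_term delta grd gsd rho \<in> O(\<lambda>g. ln g / g\<^sup>2)"
      unfolding Z2_term_def using \<open>gsd > 0\<close> \<open>grd > 0\<close> params by real_asymp+
    moreover note landau_o.big.mult[OF e landau_o.big.mult[OF a1 sqrt_eta]]
      landau_o.big.mult[OF e \<open>(\<lambda>g. 1 / (gsd * g + 2)) \<in> O(\<lambda>g. 1 / g)\<close>]
    ultimately show ?thesis
      unfolding U_def by (intro sum_in_bigo) (simp_all add: landau_o.big_trans)
  qed
  finally show "SER M Ts Lsd Lsr Lrd delta rho \<in> O(\<lambda>g. ln g / g\<^sup>2)" .
qed

theorem mainTheorem3:
  fixes M :: nat and Ts Lsd Lsr Lrd delta rho :: real
  assumes "M \<ge> 2" and "Ts > 0" and "Lsd > 0" and "Lsr > 0" and "Lrd > 0"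
    and "0 < delta" and "delta \<le> 1" and "0 < rho" and "rho < 1"
  shows "(\<forall>\<^sub>F g in at_top. 0 < eps_err M rho Ts Lsr g \<and> eps_err M rho Ts Lsr g < 1
                              \<and> 0 < SER M Ts Lsd Lsr Lrd delta rho g)
     \<and> ((\<lambda>g. ln (SER M Ts Lsd Lsr Lrd delta rho g) / ln g) \<longlongrightarrow> -2) at_top"
proof -
  obtain l where "l > 0" and lim: "((\<lambda>g. g * eps_err M rho Ts Lsr g) \<longlongrightarrow> l) at_top"
    using eps_err_scaled_tendsto assms by metis
  note eps = eventually_bounds_of_scaled_tendsto[OF lim \<open>l > 0\<close>]
  define c where "c = l / 2 / (g_sd M Ts Lsd + 2)"
  have "c > 0" using g_sd_g_rd_pos(1)[OF assms(1-5)] \<open>l > 0\<close> by (simp add: c_def)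
  have "l / 2 > 0" using \<open>l > 0\<close> by simp
  note order = SER_order[OF assms(1-6,8) this eps, folded c_def]
  have "\<forall>\<^sub>F g in at_top. 0 < eps_err M rho Ts Lsr g \<and> eps_err M rho Ts Lsr g < 1
                              \<and> 0 < SER M Ts Lsd Lsr Lrd delta rho g"
    using eps order(1) eventually_gt_at_top[of "4 * l"]
  proof eventually_elim
    case (elim g)
    moreover have "0 < l / 2 / g" "2 * l / g < 1" "0 < c / g\<^sup>2"
      using elim \<open>l > 0\<close> \<open>c > 0\<close> by (auto simp: field_simps)
    ultimately show ?case by linarith
  qed
  moreover have "((\<lambda>g. ln (SER M Ts Lsd Lsr Lrd delta rho g) / ln g) \<longlongrightarrow> -2) at_top"
    using order(2) \<open>c > 0\<close> order(1) by (rule ln_div_ln_tendsto_neg_two)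
  ultimately show ?thesis ..
qed

end
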